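(* Consider the single-input control-affine system $\dot{x} = f(x) + g(x)u$ and a Lipschitz continuous exponential CBF $h$ with relative degree $r<n$ and rates $\gamma_1,\dots,\gamma_r>0$, $\gamma_{\min}=\min_i\gamma_i$, written in cascading constraint coordinates as $\dot{\varphi} = A_\gamma \varphi + B\mu$, $\dot{\eta} = q_{\mathrm{cbf}}(\eta,\varphi)$, where $l_\varphi$ denotes the Lipschitz constant of $q_{\mathrm{cbf}}$ with respect to $\varphi$. Let $x_0\in S_\varphi$. Suppose the positive-feedback-stabilizable global exponential minimum phase condition holds: there is a Lipschitz feedback $\kappa_{\mathrm{ps}}:\mathbb{R}^{n-r}\to\mathbb{R}_{\ge0}$ such that $\dot\eta=q_{\mathrm{cbf}}(\eta,\Gamma\kappa_{\mathrm{ps}}(\eta))$ has a globally exponentially stable equilibrium $\eta_e$. Let $V$ be a (converse) Lyapunov function with constants $\alpha_1,\alpha_2,\alpha_3,\alpha_4>0$ such that $\alpha_1|\eta-\eta_e|^2\le V(\eta)\le\alpha_2|\eta-\eta_e|^2$, $|\partial V/\partial\eta|\le\alpha_3|\eta-\eta_e|$, and $\frac{\partial V}{\partial\eta}\cdot q_{\mathrm{cbf}}(\eta,\Gamma\kappa_{\mathrm{ps}}(\eta))\le-\alpha_4|\eta-\eta_e|^2$. If $\alpha_4>\left(\frac{\alpha_3 l_\varphi}{2}\right)^2$ and $\gamma_{\min}$ is large enough, then the system under the barrier constraint can stay bounded; in particular, setting $\mu(t)=\kappa_{\mathrm{ps}}(\eta(t))$ (which satisfies $\mu\ge0$), the trajectory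 satisfies $(\varphi(t),\eta(t))\to(\Gamma\kappa_{\mathrm{ps}}(\eta_e),\eta_e)$ and thus stays bounded.
   Context: The system $\dot x = f(x)+g(x)u$ has $f,g:\mathbb{R}^n\to\mathbb{R}^n$ Lipschitz and $u\in\mathbb{R}$. $L_f$, $L_g$ denote Lie derivatives. $h$ has relative degree $r$ at $x$ if $L_gL_f^k h\equiv 0$ near $x$ for $k=0,\dots,r-2$ and $L_gL_f^{r-1}h(x)\neq 0$. An exponential CBF with relative degree $r$ is $h:\mathbb{R}^n\to\mathbb{R}$ with relative degree $r$ on $\mathcal{C}=\{h\ge 0\}$, $\partial h/\partial x\neq0$ on $\{h=0\}$, and $\sup_{u}[L_f^r h(x)+L_gL_f^{r-1}h(x)u+k^\top\xi(x)]\ge 0$ on $\mathcal{C}$, where $\xi=[h,L_fh,\dots,L_f^{r-1}h]^\top$ and $s^r+k_rs^{r-1}+\dots+k_1=(s+\gamma_1)\cdots(s+\gamma_r)$, $\gamma_i>0$. Virtual control input: $\mu(x,u)=L_f^rh+L_gL_f^{r-1}h\,u+k^\top\xi$; barrier constraint: $\mu\ge0$. Cascading constraint vector: $\varphi_1=h$, $\varphi_{i+1}=\dot\varphi_i+\gamma_i\varphi_i$; $S_\varphi=\{x:\varphi(x)\in\mathbb{R}^r_{\ge0}\}$. $A_\gamma$ is the $r\times r$ upper bidiagonal matrix with diagonal $-\gamma_1,\dots,-\gamma_r$ and superdiagonal entries $1$; $B=[0,\dots,0,1]^\top$; $\Gamma=-A_\gamma^{-1}B=[(\gamma_1\cdots\gamma_r)^{-1},(\gamma_2\cdots\gamma_r)^{-1},\dots,\gamma_r^{-1}]^\top$.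 The internal state $\eta\in\mathbb{R}^{n-r}$ is chosen so that $x\mapsto(\varphi,\eta)$ is a diffeomorphism and $L_g\eta_j\equiv 0$; then $\dot\varphi=A_\gamma\varphi+B\mu$, $\dot\eta=q_{\mathrm{cbf}}(\eta,\varphi)$ with $q_{\mathrm{cbf}}$ Lipschitz in $\eta$ and $\varphi$. Any signal $\mu(t)$ can be realized by a choice of $u$. *)

theory Defs
  imports "HOL-Analysis.Analysis"
begin

text \<open>Vectors in R^r are represented as functions nat => real, of which only the
  components 0..r-1 (0-based) are meaningful. The 1-based index i of the paper
  corresponds to index i-1 here.\<close>

definition vnorm :: "nat \<Rightarrow> (nat \<Rightarrow> real) \<Rightarrow> real" where
  "vnorm r v = sqrt (\<Sum>i<r. (v i)^2)"

text \<open>Gamma = - A_gamma^{-1} B, i.e. Gamma_i = 1/(gamma_i * ... * gamma_r) (1-based).\<close>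
definition Gam :: "(nat \<Rightarrow> real) \<Rightarrow> nat \<Rightarrow> nat \<Rightarrow> real" where
  "Gam \<gamma> r i = 1 / (\<Prod>j\<in>{i..<r}. \<gamma> j)"

text \<open>i-th component (0-based, i < r) of A_gamma phi + B mu, where A_gamma is upper
  bidiagonal with diagonal -gamma_1..-gamma_r and superdiagonal 1, B = e_r.\<close>
definition casc_rhs :: "nat \<Rightarrow> (nat \<Rightarrow> real) \<Rightarrow> (nat \<Rightarrow> real) \<Rightarrow> real \<Rightarrow> nat \<Rightarrow> real" where
  "casc_rhs r \<gamma> \<phi> \<mu> i = - \<gamma> i * \<phi> i + (if Suc i < r then \<phi> (Suc i) else \<mu>)"

end

theory Submission
  imports Defs "HOL-Real_Asymp.Real_Asymp"
begin

text \<open>In the error coordinates z = phi - Gamma kappa(eta_e) the cascade reads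
  z' = A_gamma z + B (kappa(eta) - kappa(eta_e)), and the internal dynamics differ from the
  stabilised ones q(eta, Gamma kappa(eta)) by at most l_phi (|z| + |Gamma| |kappa(eta) - kappa(eta_e)|).
  Along W = V(eta) + |z|^2 the diagonal -gamma_i of A_gamma dominates the superdiagonal
  coupling and, once gamma_min is large, every cross term between eta - eta_e and z, so that
  W' <= -beta W. Exponential decay of W gives convergence to (Gamma kappa(eta_e), eta_e) and a
  uniform bound on the trajectory.\<close>

lemma vnorm_eq_L2_set: "vnorm r v = L2_set v {..<r}"
  by (simp add: vnorm_def L2_set_def)

lemma vnorm_nonneg: "0 \<le> vnorm r v"
  by (simp add: vnorm_eq_L2_set L2_set_nonneg)

lemma vnorm_power2: "(vnorm r v)\<^sup>2 = (\<Sum>i<r. (v i)\<^sup>2)"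
  by (simp add: vnorm_def sum_nonneg)

lemma vnorm_triangle: "vnorm r (\<lambda>i. u i + v i) \<le> vnorm r u + vnorm r v"
  unfolding vnorm_eq_L2_set by (rule L2_set_triangle_ineq)

lemma abs_le_vnorm:
  assumes "i < r"
  shows "\<bar>v i\<bar> \<le> vnorm r v"
proof -
  have "\<bar>v i\<bar> \<le> L2_set (\<lambda>j. \<bar>v j\<bar>) {..<r}"
    by (rule member_le_L2_set) (use assms in auto)
  then show ?thesis
    by (simp add: vnorm_eq_L2_set L2_set_def)
qed

lemma Gam_self: "Gam \<gamma> r r = 1"
  by (simp add: Gam_def)

lemma Gam_step:
  assumes "i < r" "\<gamma> i \<noteq> 0"
  shows "\<gamma> i * Gam \<gamma> r i = Gam \<gamma> r (Suc i)"
  unfolding Gam_def prod.atLeast_Suc_lessThan[OF assms(1)] using assms(2) by simp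

lemma Gam_bounds:
  assumes "1 \<le> g" "\<And>j. j < r \<Longrightarrow> g \<le> \<gamma> j" "i < r"
  shows "0 < Gam \<gamma> r i" "Gam \<gamma> r i \<le> 1 / g"
proof -
  have "g ^ 1 \<le> g ^ (r - i)"
    by (rule power_increasing) (use assms in auto)
  also have "\<dots> = (\<Prod>j\<in>{i..<r}. g)"
    by simp
  also have "\<dots> \<le> (\<Prod>j\<in>{i..<r}. \<gamma> j)"
    by (rule prod_mono) (use assms in auto)
  finally have "g \<le> (\<Prod>j\<in>{i..<r}. \<gamma> j)"
    by simp
  then show "0 < Gam \<gamma> r i" "Gam \<gamma> r i \<le> 1 / g"
    using assms(1) by (simp_all add: Gam_def frac_le)
qed

lemma vnorm_Gam_le:
  assumes "1 \<le> g" "\<And>i. i < r \<Longrightarrow> g \<le> \<gamma> i"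
  shows "vnorm r (\<lambda>i. Gam \<gamma> r i * c) \<le> real r / g * \<bar>c\<bar>"
proof -
  have "vnorm r (\<lambda>i. Gam \<gamma> r i * c) \<le> (\<Sum>i<r. \<bar>Gam \<gamma> r i * c\<bar>)"
    unfolding vnorm_eq_L2_set by (rule L2_set_le_sum_abs)
  also have "\<dots> \<le> (\<Sum>i<r. 1 / g * \<bar>c\<bar>)"
  proof (rule sum_mono)
    fix i
    assume "i \<in> {..<r}"
    then have "0 < Gam \<gamma> r i" "Gam \<gamma> r i \<le> 1 / g"
      using Gam_bounds[of g r \<gamma> i] assms by auto
    then show "\<bar>Gam \<gamma> r i * c\<bar> \<le> 1 / g * \<bar>c\<bar>"
      unfolding abs_mult by (intro mult_right_mono) auto
  qed
  finally show ?thesis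
    by simp
qed

text \<open>Moving the equilibrium Gamma k of phi' = A_gamma phi + B k to the origin leaves A_gamma
  unchanged, because A_gamma Gamma = -B.\<close>

lemma casc_rhs_shift:
  assumes "i < r" "\<gamma> i \<noteq> 0"
  shows "casc_rhs r \<gamma> p \<mu> i = casc_rhs r \<gamma> (\<lambda>j. p j - Gam \<gamma> r j * k) (\<mu> - k) i"
proof (cases "Suc i < r")
  case True
  then show ?thesis
    using Gam_step[of i r \<gamma>] assms by (simp add: casc_rhs_def algebra_simps)
next
  case False
  then have "Suc i = r"
    using assms(1) by simp
  then have "\<gamma> i * Gam \<gamma> r i = 1"
    using Gam_step[of i r \<gamma>] assms Gam_self by simp
  then show ?thesis
    using False by (simp add: casc_rhs_def algebra_simps)
qed

lemma sum_shift_power2_le: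
  fixes z :: "nat \<Rightarrow> real"
  shows "(\<Sum>i<r. (if Suc i < r then z (Suc i) else 0)\<^sup>2) \<le> (\<Sum>i<r. (z i)\<^sup>2)"
proof (cases r)
  case (Suc m)
  have "(\<Sum>i<r. (if Suc i < r then z (Suc i) else 0)\<^sup>2) = (\<Sum>i<m. (z (Suc i))\<^sup>2)"
    unfolding Suc by (simp add: lessThan_Suc)
  also have "\<dots> \<le> (z 0)\<^sup>2 + (\<Sum>i<m. (z (Suc i))\<^sup>2)"
    by simp
  also have "\<dots> = (\<Sum>i<r. (z i)\<^sup>2)"
    unfolding Suc by (rule sum.lessThan_Suc_shift[symmetric])
  finally show ?thesis .
qed simp

lemma sum_mult_shift_le:
  fixes z :: "nat \<Rightarrow> real"
  shows "(\<Sum>i<r. 2 * z i * (if Suc i < r then z (Suc i) else 0)) \<le> 2 * (vnorm r z)\<^sup>2"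
proof -
  have "(\<Sum>i<r. 2 * z i * (if Suc i < r then z (Suc i) else 0))
          \<le> (\<Sum>i<r. (z i)\<^sup>2) + (\<Sum>i<r. (if Suc i < r then z (Suc i) else 0)\<^sup>2)"
    unfolding sum.distrib[symmetric] by (intro sum_mono) (rule sum_squares_bound)
  also have "(\<Sum>i<r. (if Suc i < r then z (Suc i) else 0)\<^sup>2) \<le> (\<Sum>i<r. (z i)\<^sup>2)"
    by (rule sum_shift_power2_le)
  finally show ?thesis
    by (simp add: vnorm_power2)
qed

lemma sum_mult_last_le:
  "(\<Sum>i<r. 2 * z i * (if Suc i < r then 0 else w)) \<le> 2 * \<bar>w\<bar> * vnorm r z"
proof (cases r)
  case (Suc m)
  have "(\<Sum>i<r. 2 * z i * (if Suc i < r then 0 else w)) = 2 * z m * w"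
    unfolding Suc by simp
  also have "\<dots> \<le> 2 * \<bar>w\<bar> * \<bar>z m\<bar>"
    using abs_ge_self[of "z m * w"] by (simp add: abs_mult mult_ac)
  also have "\<dots> \<le> 2 * \<bar>w\<bar> * vnorm r z"
    using abs_le_vnorm[of m r z] Suc by (simp add: mult_left_mono)
  finally show ?thesis .
qed (simp add: vnorm_nonneg)

lemma casc_rhs_energy_le:
  assumes "\<And>i. i < r \<Longrightarrow> g \<le> \<gamma> i"
  shows "(\<Sum>i<r. 2 * z i * casc_rhs r \<gamma> z w i)
           \<le> - 2 * (g - 1) * (vnorm r z)\<^sup>2 + 2 * \<bar>w\<bar> * vnorm r z"
proof -
  define s where "s i = (if Suc i < r then z (Suc i) else 0)" for i
  define e where "e i = (if Suc i < r then 0 else w)" for i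
  have "(\<Sum>i<r. 2 * z i * (- \<gamma> i * z i)) \<le> (\<Sum>i<r. - 2 * g * (z i)\<^sup>2)"
  proof (rule sum_mono)
    fix i
    assume "i \<in> {..<r}"
    then have "g * (z i)\<^sup>2 \<le> \<gamma> i * (z i)\<^sup>2"
      using assms by (simp add: mult_right_mono)
    then show "2 * z i * (- \<gamma> i * z i) \<le> - 2 * g * (z i)\<^sup>2"
      by (simp add: power2_eq_square algebra_simps)
  qed
  also have "\<dots> = - 2 * g * (vnorm r z)\<^sup>2"
    by (simp add: vnorm_power2 sum_distrib_left)
  finally have diagonal: "(\<Sum>i<r. 2 * z i * (- \<gamma> i * z i)) \<le> - 2 * g * (vnorm r z)\<^sup>2" .
  have "(\<Sum>i<r. 2 * z i * casc_rhs r \<gamma> z w i)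
          = (\<Sum>i<r. 2 * z i * (- \<gamma> i * z i)) + (\<Sum>i<r. 2 * z i * s i) + (\<Sum>i<r. 2 * z i * e i)"
    unfolding sum.distrib[symmetric]
    by (intro sum.cong) (simp_all add: casc_rhs_def s_def e_def algebra_simps)
  moreover have "- 2 * (g - 1) * (vnorm r z)\<^sup>2 = - 2 * g * (vnorm r z)\<^sup>2 + 2 * (vnorm r z)\<^sup>2"
    by (simp add: algebra_simps)
  ultimately show ?thesis
    using diagonal sum_mult_shift_le[where z = z and r = r]
      sum_mult_last_le[where z = z and w = w and r = r]
    unfolding s_def e_def by linarith
qed

lemma mult_le_weighted_squares:
  fixes a b x y :: real
  assumes "0 < a"
  shows "b * x * y \<le> a / 4 * x\<^sup>2 + b\<^sup>2 / a * y\<^sup>2"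
proof -
  have "a * (b * x * y) \<le> a * (a / 4 * x\<^sup>2 + b\<^sup>2 / a * y\<^sup>2)"
    using zero_le_power2[of "a / 2 * x - b * y"] assms
    by (simp add: algebra_simps power2_eq_square)
  then show ?thesis
    using assms by simp
qed

lemma exp_decay_of_derivative_le:
  fixes W W' :: "real \<Rightarrow> real"
  assumes deriv: "\<And>t. 0 \<le> t \<Longrightarrow> (W has_real_derivative W' t) (at t within {0..})"
    and decay: "\<And>t. 0 \<le> t \<Longrightarrow> W' t \<le> - \<beta> * W t"
    and "0 \<le> t"
  shows "W t \<le> W 0 * exp (- \<beta> * t)"
proof -
  define E where "E s = W s * exp (\<beta> * s)" for s
  define E' where "E' s = (W' s + \<beta> * W s) * exp (\<beta> * s)" for s
  have "(E has_derivative (\<lambda>h. h * E' s)) (at s within {0..t})" if "s \<in> {0..t}" for s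
  proof -
    have "(E has_real_derivative E' s) (at s within {0..})"
      unfolding E_def E'_def using deriv[of s] that
      by (auto intro!: derivative_eq_intros simp: algebra_simps)
    then show ?thesis
      by (auto simp: has_field_derivative_def mult_commute_abs intro: has_derivative_subset)
  qed
  then obtain s where s: "s \<in> {0..t}" "E t - E 0 = t * E' s"
    using mvt_very_simple[OF \<open>0 \<le> t\<close>, of E "\<lambda>s h. h * E' s"] by auto
  have "E' s \<le> 0"
    using decay[of s] s(1) by (simp add: E'_def mult_nonpos_nonneg)
  then have "E t - E 0 \<le> 0"
    using s(2) mult_nonneg_nonpos[OF \<open>0 \<le> t\<close>] by simp
  then have "E t \<le> W 0"
    by (simp add: E_def)
  then have "E t * exp (- \<beta> * t) \<le> W 0 * exp (- \<beta> * t)"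
    by (simp add: mult_right_mono)
  then show ?thesis
    by (simp add: E_def mult.assoc exp_add[symmetric])
qed

lemma has_real_derivative_comp_vector:
  assumes "(V has_derivative (\<lambda>h. D \<bullet> h)) (at (\<eta> t))"
    and "(\<eta> has_vector_derivative v) (at t within S)"
  shows "((\<lambda>s. V (\<eta> s)) has_real_derivative D \<bullet> v) (at t within S)"
proof -
  have "(V \<circ> \<eta> has_derivative (\<lambda>h. D \<bullet> h) \<circ> (\<lambda>h. h *\<^sub>R v)) (at t within S)"
    using assms(2) has_derivative_subset[OF assms(1), of "\<eta> ` S"]
    by (intro diff_chain_within) (auto simp: has_vector_derivative_def)
  then show ?thesis
    by (simp add: has_field_derivative_def o_def mult.commute mult_commute_abs)
qed

locale cbf_cascade =
  fixes r :: nat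
    and \<gamma> :: "nat \<Rightarrow> real"
    and g :: real
    and q :: "'b::euclidean_space \<Rightarrow> (nat \<Rightarrow> real) \<Rightarrow> 'b"
    and \<kappa> :: "'b \<Rightarrow> real"
    and V :: "'b \<Rightarrow> real"
    and DV :: "'b \<Rightarrow> 'b"
    and \<eta>e :: 'b
    and l L \<alpha>1 \<alpha>2 \<alpha>3 \<alpha>4 :: real
  assumes q_lip_phi: "\<And>a p p'. norm (q a p - q a p') \<le> l * vnorm r (\<lambda>i. p i - p' i)"
    and kappa_lip: "\<And>a b. \<bar>\<kappa> a - \<kappa> b\<bar> \<le> L * norm (a - b)"
    and lip_nonneg: "0 \<le> l" "0 \<le> L"
    and alpha_pos: "0 < \<alpha>1" "0 < \<alpha>2" "0 < \<alpha>3" "0 < \<alpha>4"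
    and V_deriv: "\<And>a. (V has_derivative (\<lambda>h. DV a \<bullet> h)) (at a)"
    and V_bounds: "\<And>a. \<alpha>1 * (norm (a - \<eta>e))\<^sup>2 \<le> V a \<and> V a \<le> \<alpha>2 * (norm (a - \<eta>e))\<^sup>2"
    and DV_bound: "\<And>a. norm (DV a) \<le> \<alpha>3 * norm (a - \<eta>e)"
    and V_decrease: "\<And>a. DV a \<bullet> q a (\<lambda>i. Gam \<gamma> r i * \<kappa> a) \<le> - \<alpha>4 * (norm (a - \<eta>e))\<^sup>2"
    \<comment> \<open>the gain dominates the cross term left by Young's inequality and the mismatch
      between Gamma kappa(a) and Gamma kappa(eta_e), whose norm is at most r L |a - eta_e| / g\<close>
    and gain_large: "2 + ((\<alpha>3 * l + 2 * L)\<^sup>2 + 2 * \<alpha>3 * l * L * real r) / \<alpha>4 \<le> g"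
    and gamma_ge: "\<And>i. i < r \<Longrightarrow> g \<le> \<gamma> i"
begin

definition \<phi>e :: "nat \<Rightarrow> real" where
  "\<phi>e i = Gam \<gamma> r i * \<kappa> \<eta>e"

definition lyap :: "'b \<Rightarrow> (nat \<Rightarrow> real) \<Rightarrow> real" where
  "lyap a p = V a + (vnorm r (\<lambda>i. p i - \<phi>e i))\<^sup>2"

definition decay_rate :: real where
  "decay_rate = min (\<alpha>4 / 4) 1 / max \<alpha>2 1"

lemma decay_rate_pos: "0 < decay_rate"
  using alpha_pos by (simp add: decay_rate_def)

lemma cross_gain_le: "(\<alpha>3 * l + 2 * L)\<^sup>2 / \<alpha>4 \<le> g - 2"
proof -
  have "0 \<le> 2 * \<alpha>3 * l * L * real r / \<alpha>4"
    using alpha_pos lip_nonneg by simp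
  then show ?thesis
    using gain_large by (simp add: add_divide_distrib)
qed

lemma gain_ge_two: "2 \<le> g"
proof -
  have "0 \<le> (\<alpha>3 * l + 2 * L)\<^sup>2 / \<alpha>4"
    using alpha_pos by simp
  then show ?thesis
    using cross_gain_le by linarith
qed

lemma feedback_gain_le: "\<alpha>3 * l * L * real r / g \<le> \<alpha>4 / 2"
proof -
  have "0 \<le> (\<alpha>3 * l + 2 * L)\<^sup>2 / \<alpha>4"
    using alpha_pos by simp
  then have "2 * \<alpha>3 * l * L * real r / \<alpha>4 \<le> g"
    using gain_large by (simp add: add_divide_distrib)
  then show ?thesis
    using alpha_pos gain_ge_two by (simp add: field_simps)
qed

lemma V_dissipation:
  "DV a \<bullet> q a p
     \<le> - (\<alpha>4 / 2) * (norm (a - \<eta>e))\<^sup>2 + \<alpha>3 * l * norm (a - \<eta>e) * vnorm r (\<lambda>i. p i - \<phi>e i)"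
proof -
  define x where "x = norm (a - \<eta>e)"
  define y where "y = vnorm r (\<lambda>i. p i - \<phi>e i)"
  define p0 where "p0 = (\<lambda>i. Gam \<gamma> r i * \<kappa> a)"
  have "vnorm r (\<lambda>i. p i - p0 i) \<le> y + vnorm r (\<lambda>i. Gam \<gamma> r i * (\<kappa> \<eta>e - \<kappa> a))"
    using vnorm_triangle[of r "\<lambda>i. p i - \<phi>e i" "\<lambda>i. Gam \<gamma> r i * (\<kappa> \<eta>e - \<kappa> a)"]
    by (simp add: y_def p0_def \<phi>e_def algebra_simps)
  also have "vnorm r (\<lambda>i. Gam \<gamma> r i * (\<kappa> \<eta>e - \<kappa> a)) \<le> real r / g * \<bar>\<kappa> \<eta>e - \<kappa> a\<bar>"
    using gain_ge_two gamma_ge by (intro vnorm_Gam_le) auto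
  also have "\<dots> \<le> real r / g * (L * x)"
    using kappa_lip[of \<eta>e a] gain_ge_two by (intro mult_left_mono) (auto simp: x_def norm_minus_commute)
  finally have p0_close: "vnorm r (\<lambda>i. p i - p0 i) \<le> y + real r / g * (L * x)"
    by simp
  have "DV a \<bullet> q a p = DV a \<bullet> q a p0 + DV a \<bullet> (q a p - q a p0)"
    by (simp add: inner_diff_right)
  also have "DV a \<bullet> q a p0 \<le> - \<alpha>4 * x\<^sup>2"
    using V_decrease by (simp add: x_def p0_def)
  also have "DV a \<bullet> (q a p - q a p0) \<le> norm (DV a) * norm (q a p - q a p0)"
    by (rule norm_cauchy_schwarz)
  also have "\<dots> \<le> (\<alpha>3 * x) * (l * (y + real r / g * (L * x)))"
    using DV_bound[of a] q_lip_phi[of a p p0] p0_close lip_nonneg alpha_pos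
    by (intro mult_mono) (auto simp: x_def intro: order_trans mult_left_mono)
  also have "\<dots> = \<alpha>3 * l * x * y + (\<alpha>3 * l * L * real r / g) * x\<^sup>2"
    by (simp add: algebra_simps power2_eq_square)
  also have "(\<alpha>3 * l * L * real r / g) * x\<^sup>2 \<le> (\<alpha>4 / 2) * x\<^sup>2"
    by (rule mult_right_mono[OF feedback_gain_le zero_le_power2])
  finally have "DV a \<bullet> q a p \<le> - \<alpha>4 * x\<^sup>2 + (\<alpha>3 * l * x * y + \<alpha>4 / 2 * x\<^sup>2)"
    by simp
  also have "\<dots> = - (\<alpha>4 / 2) * x\<^sup>2 + \<alpha>3 * l * x * y"
    by (simp add: field_simps)
  finally show ?thesis
    by (simp add: x_def y_def)
qed

lemma cascade_dissipation:
  "(\<Sum>i<r. 2 * (p i - \<phi>e i) * casc_rhs r \<gamma> p (\<kappa> a) i)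
     \<le> - 2 * (g - 1) * (vnorm r (\<lambda>i. p i - \<phi>e i))\<^sup>2
       + 2 * L * norm (a - \<eta>e) * vnorm r (\<lambda>i. p i - \<phi>e i)"
proof -
  define z where "z = (\<lambda>i. p i - \<phi>e i)"
  have "casc_rhs r \<gamma> p (\<kappa> a) i = casc_rhs r \<gamma> z (\<kappa> a - \<kappa> \<eta>e) i" if "i < r" for i
    unfolding z_def \<phi>e_def using casc_rhs_shift[OF that] gamma_ge[OF that] gain_ge_two by simp
  then have "(\<Sum>i<r. 2 * (p i - \<phi>e i) * casc_rhs r \<gamma> p (\<kappa> a) i)
               = (\<Sum>i<r. 2 * z i * casc_rhs r \<gamma> z (\<kappa> a - \<kappa> \<eta>e) i)"
    by (simp add: z_def)
  also have "\<dots> \<le> - 2 * (g - 1) * (vnorm r z)\<^sup>2 + 2 * \<bar>\<kappa> a - \<kappa> \<eta>e\<bar> * vnorm r z"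
    by (rule casc_rhs_energy_le[OF gamma_ge])
  also have "\<dots> \<le> - 2 * (g - 1) * (vnorm r z)\<^sup>2 + 2 * L * norm (a - \<eta>e) * vnorm r z"
    using kappa_lip[of a \<eta>e] vnorm_nonneg[of r z] by (simp add: mult_right_mono)
  finally show ?thesis
    by (simp add: z_def)
qed

lemma lyap_lower:
  "\<alpha>1 * (norm (a - \<eta>e))\<^sup>2 + (vnorm r (\<lambda>i. p i - \<phi>e i))\<^sup>2 \<le> lyap a p"
  using V_bounds[of a] by (simp add: lyap_def)

lemma lyap_upper:
  "lyap a p \<le> max \<alpha>2 1 * ((norm (a - \<eta>e))\<^sup>2 + (vnorm r (\<lambda>i. p i - \<phi>e i))\<^sup>2)"
proof -
  define x where "x = norm (a - \<eta>e)"
  define y where "y = vnorm r (\<lambda>i. p i - \<phi>e i)"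
  have "lyap a p \<le> \<alpha>2 * x\<^sup>2 + y\<^sup>2"
    using V_bounds[of a] by (simp add: lyap_def x_def y_def)
  also have "\<dots> \<le> max \<alpha>2 1 * x\<^sup>2 + max \<alpha>2 1 * y\<^sup>2"
    using mult_right_mono[of 1 "max \<alpha>2 1" "y\<^sup>2"]
    by (intro add_mono mult_right_mono) simp_all
  finally show ?thesis
    by (simp add: x_def y_def distrib_left)
qed

lemma lyap_dissipation:
  "DV a \<bullet> q a p + (\<Sum>i<r. 2 * (p i - \<phi>e i) * casc_rhs r \<gamma> p (\<kappa> a) i) \<le> - decay_rate * lyap a p"
proof -
  define x where "x = norm (a - \<eta>e)"
  define y where "y = vnorm r (\<lambda>i. p i - \<phi>e i)"
  define b where "b = \<alpha>3 * l + 2 * L"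
  have "DV a \<bullet> q a p + (\<Sum>i<r. 2 * (p i - \<phi>e i) * casc_rhs r \<gamma> p (\<kappa> a) i)
          \<le> (- (\<alpha>4 / 2) * x\<^sup>2 + \<alpha>3 * l * x * y) + (- 2 * (g - 1) * y\<^sup>2 + 2 * L * x * y)"
    unfolding x_def y_def by (rule add_mono[OF V_dissipation cascade_dissipation])
  also have "\<dots> = - (\<alpha>4 / 2) * x\<^sup>2 + b * x * y - 2 * (g - 1) * y\<^sup>2"
    by (simp add: b_def algebra_simps)
  also have "\<dots> \<le> - min (\<alpha>4 / 4) 1 * (x\<^sup>2 + y\<^sup>2)"
  proof -
    have "b\<^sup>2 / \<alpha>4 * y\<^sup>2 \<le> g * y\<^sup>2 - 2 * y\<^sup>2"
      using mult_right_mono[OF cross_gain_le zero_le_power2[of y]] by (simp add: b_def algebra_simps)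
    moreover have "y\<^sup>2 \<le> g * y\<^sup>2"
      using mult_right_mono[of 1 g "y\<^sup>2"] gain_ge_two by simp
    moreover have "(\<alpha>4 / 2) * x\<^sup>2 = 2 * ((\<alpha>4 / 4) * x\<^sup>2)" "2 * (g - 1) * y\<^sup>2 = 2 * (g * y\<^sup>2) - 2 * y\<^sup>2"
      by (simp_all add: algebra_simps)
    ultimately have "- (\<alpha>4 / 2) * x\<^sup>2 + b * x * y - 2 * (g - 1) * y\<^sup>2 \<le> - (\<alpha>4 / 4) * x\<^sup>2 - y\<^sup>2"
      using mult_le_weighted_squares[of \<alpha>4 b x y] alpha_pos by linarith
    also have "\<dots> \<le> - min (\<alpha>4 / 4) 1 * (x\<^sup>2 + y\<^sup>2)"
      by (simp add: algebra_simps mult_right_mono min_def)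
    finally show ?thesis .
  qed
  also have "\<dots> = - decay_rate * (max \<alpha>2 1 * (x\<^sup>2 + y\<^sup>2))"
    by (simp add: decay_rate_def)
  also have "\<dots> \<le> - decay_rate * lyap a p"
    using lyap_upper[of a p] decay_rate_pos by (simp add: x_def y_def)
  finally show ?thesis .
qed

lemma norm_le_sqrt_lyap: "norm (a - \<eta>e) \<le> sqrt (lyap a p / \<alpha>1)"
proof (rule real_le_rsqrt)
  have "\<alpha>1 * (norm (a - \<eta>e))\<^sup>2 \<le> lyap a p"
    using lyap_lower[of a p] zero_le_power2[of "vnorm r (\<lambda>i. p i - \<phi>e i)"] by linarith
  then show "(norm (a - \<eta>e))\<^sup>2 \<le> lyap a p / \<alpha>1"
    using alpha_pos by (simp add: field_simps)
qed

lemma vnorm_le_sqrt_lyap: "vnorm r (\<lambda>i. p i - \<phi>e i) \<le> sqrt (lyap a p)"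
proof (rule real_le_rsqrt)
  have "0 \<le> \<alpha>1 * (norm (a - \<eta>e))\<^sup>2"
    using alpha_pos by simp
  then show "(vnorm r (\<lambda>i. p i - \<phi>e i))\<^sup>2 \<le> lyap a p"
    using lyap_lower[of a p] by linarith
qed

lemma lyap_nonneg: "0 \<le> lyap a p"
  using order_trans[OF vnorm_nonneg vnorm_le_sqrt_lyap] by simp

context
  fixes \<phi> :: "real \<Rightarrow> nat \<Rightarrow> real" and \<eta> :: "real \<Rightarrow> 'b"
  assumes phi_deriv: "\<And>t i. 0 \<le> t \<Longrightarrow> i < r \<Longrightarrow>
      ((\<lambda>s. \<phi> s i) has_real_derivative casc_rhs r \<gamma> (\<phi> t) (\<kappa> (\<eta> t)) i) (at t within {0..})"
    and eta_deriv: "\<And>t. 0 \<le> t \<Longrightarrow> (\<eta> has_vector_derivative q (\<eta> t) (\<phi> t)) (at t within {0..})"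
begin

lemma lyap_has_derivative_along:
  assumes "0 \<le> t"
  shows "((\<lambda>s. lyap (\<eta> s) (\<phi> s)) has_real_derivative
           DV (\<eta> t) \<bullet> q (\<eta> t) (\<phi> t)
           + (\<Sum>i<r. 2 * (\<phi> t i - \<phi>e i) * casc_rhs r \<gamma> (\<phi> t) (\<kappa> (\<eta> t)) i)) (at t within {0..})"
proof -
  have "((\<lambda>s. \<Sum>i<r. (\<phi> s i - \<phi>e i)\<^sup>2) has_real_derivative
          (\<Sum>i<r. 2 * (\<phi> t i - \<phi>e i) * casc_rhs r \<gamma> (\<phi> t) (\<kappa> (\<eta> t)) i)) (at t within {0..})"
    using phi_deriv[OF assms] by (auto intro!: DERIV_sum derivative_eq_intros)
  then show ?thesis
    unfolding lyap_def vnorm_power2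
    by (intro DERIV_add has_real_derivative_comp_vector V_deriv eta_deriv assms)
qed

lemma lyap_exp_decay_along:
  assumes "0 \<le> t"
  shows "lyap (\<eta> t) (\<phi> t) \<le> lyap (\<eta> 0) (\<phi> 0) * exp (- decay_rate * t)"
  using lyap_has_derivative_along lyap_dissipation assms by (rule exp_decay_of_derivative_le)

lemma lyap_along_le_initial:
  assumes "0 \<le> t"
  shows "lyap (\<eta> t) (\<phi> t) \<le> lyap (\<eta> 0) (\<phi> 0)"
proof -
  have "exp (- decay_rate * t) \<le> 1"
    using decay_rate_pos assms by simp
  then show ?thesis
    using lyap_exp_decay_along[OF assms] lyap_nonneg[of "\<eta> 0" "\<phi> 0"]
    by (meson mult_left_le order_trans)
qed

lemma lyap_along_tendsto_zero: "((\<lambda>t. lyap (\<eta> t) (\<phi> t)) \<longlongrightarrow> 0) at_top"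
proof (rule tendsto_sandwich)
  show "\<forall>\<^sub>F t in at_top. 0 \<le> lyap (\<eta> t) (\<phi> t)"
    by (simp add: lyap_nonneg)
  show "\<forall>\<^sub>F t in at_top. lyap (\<eta> t) (\<phi> t) \<le> lyap (\<eta> 0) (\<phi> 0) * exp (- decay_rate * t)"
    using eventually_ge_at_top[of "0::real"] by eventually_elim (rule lyap_exp_decay_along)
  have "((\<lambda>t. c * exp (- \<beta> * t)) \<longlongrightarrow> 0) at_top" if "0 < \<beta>" for c \<beta> :: real
    using that by real_asymp
  then show "((\<lambda>t. lyap (\<eta> 0) (\<phi> 0) * exp (- decay_rate * t)) \<longlongrightarrow> 0) at_top"
    using decay_rate_pos by blast
qed simp

lemma phi_tendsto_equilibrium:
  assumes "i < r"
  shows "((\<lambda>t. \<phi> t i) \<longlongrightarrow> \<phi>e i) at_top"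
proof -
  have "((\<lambda>t. \<phi> t i - \<phi>e i) \<longlongrightarrow> 0) at_top"
  proof (rule Lim_null_comparison)
    show "\<forall>\<^sub>F t in at_top. norm (\<phi> t i - \<phi>e i) \<le> sqrt (lyap (\<eta> t) (\<phi> t))"
    proof (intro always_eventually allI)
      fix t
      have "\<bar>\<phi> t i - \<phi>e i\<bar> \<le> vnorm r (\<lambda>i. \<phi> t i - \<phi>e i)"
        by (rule abs_le_vnorm[OF assms])
      also have "\<dots> \<le> sqrt (lyap (\<eta> t) (\<phi> t))"
        by (rule vnorm_le_sqrt_lyap)
      finally show "norm (\<phi> t i - \<phi>e i) \<le> sqrt (lyap (\<eta> t) (\<phi> t))"
        by simp
    qed
    show "((\<lambda>t. sqrt (lyap (\<eta> t) (\<phi> t))) \<longlongrightarrow> 0) at_top"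
      using tendsto_real_sqrt[OF lyap_along_tendsto_zero] by simp
  qed
  then show ?thesis
    by (simp add: Lim_null[symmetric])
qed

lemma eta_tendsto_equilibrium: "(\<eta> \<longlongrightarrow> \<eta>e) at_top"
proof -
  have "((\<lambda>t. \<eta> t - \<eta>e) \<longlongrightarrow> 0) at_top"
  proof (rule Lim_null_comparison)
    show "\<forall>\<^sub>F t in at_top. norm (\<eta> t - \<eta>e) \<le> sqrt (lyap (\<eta> t) (\<phi> t) / \<alpha>1)"
      by (simp add: norm_le_sqrt_lyap)
    show "((\<lambda>t. sqrt (lyap (\<eta> t) (\<phi> t) / \<alpha>1)) \<longlongrightarrow> 0) at_top"
      using tendsto_real_sqrt[OF tendsto_divide_zero[OF lyap_along_tendsto_zero, of \<alpha>1]] by simp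
  qed
  then show ?thesis
    by (simp add: Lim_null[symmetric])
qed

lemma trajectory_bounded: "\<exists>M. \<forall>t\<ge>0. vnorm r (\<phi> t) + norm (\<eta> t) \<le> M"
proof (intro exI allI impI)
  fix t :: real
  assume "0 \<le> t"
  define W0 where "W0 = lyap (\<eta> 0) (\<phi> 0)"
  have "vnorm r (\<phi> t) \<le> vnorm r (\<lambda>i. \<phi> t i - \<phi>e i) + vnorm r \<phi>e"
    using vnorm_triangle[of r "\<lambda>i. \<phi> t i - \<phi>e i" \<phi>e] by simp
  also have "vnorm r (\<lambda>i. \<phi> t i - \<phi>e i) \<le> sqrt (lyap (\<eta> t) (\<phi> t))"
    by (rule vnorm_le_sqrt_lyap)
  also have "\<dots> \<le> sqrt W0"
    using lyap_along_le_initial[OF \<open>0 \<le> t\<close>] by (simp add: W0_def)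
  finally have phi_bound: "vnorm r (\<phi> t) \<le> sqrt W0 + vnorm r \<phi>e"
    by simp
  have "norm (\<eta> t) \<le> norm \<eta>e + norm (\<eta> t - \<eta>e)"
    by (metis add.commute diff_add_cancel norm_triangle_ineq)
  also have "norm (\<eta> t - \<eta>e) \<le> sqrt (lyap (\<eta> t) (\<phi> t) / \<alpha>1)"
    by (rule norm_le_sqrt_lyap)
  also have "\<dots> \<le> sqrt (W0 / \<alpha>1)"
    using lyap_along_le_initial[OF \<open>0 \<le> t\<close>] alpha_pos by (simp add: W0_def divide_right_mono)
  finally show "vnorm r (\<phi> t) + norm (\<eta> t) \<le> sqrt W0 + vnorm r \<phi>e + (norm \<eta>e + sqrt (W0 / \<alpha>1))"
    using phi_bound by simp
qed

end

end

theorem theorem6: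
  fixes r :: nat
    and q :: "'b::euclidean_space \<Rightarrow> (nat \<Rightarrow> real) \<Rightarrow> 'b"
    and \<kappa> :: "'b \<Rightarrow> real"
    and V :: "'b \<Rightarrow> real"
    and DV :: "'b \<Rightarrow> 'b"
    and \<eta>e :: 'b
    and L\<eta> l\<phi> L\<kappa> \<alpha>1 \<alpha>2 \<alpha>3 \<alpha>4 :: real
  assumes r_pos: "1 \<le> r"
    and q_lip_eta: "\<And>a b p. norm (q a p - q b p) \<le> L\<eta> * norm (a - b)"
    and q_lip_phi: "\<And>a p p'. norm (q a p - q a p') \<le> l\<phi> * vnorm r (\<lambda>i. p i - p' i)"
    and kappa_lip: "\<And>a b. \<bar>\<kappa> a - \<kappa> b\<bar> \<le> L\<kappa> * norm (a - b)"
    and kappa_nonneg: "\<And>a. \<kappa> a \<ge> 0"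
    and alpha_pos: "\<alpha>1 > 0" "\<alpha>2 > 0" "\<alpha>3 > 0" "\<alpha>4 > 0"
    and V_deriv: "\<And>a. (V has_derivative (\<lambda>h. DV a \<bullet> h)) (at a)"
    and V_bounds: "\<And>a. \<alpha>1 * (norm (a - \<eta>e))^2 \<le> V a \<and> V a \<le> \<alpha>2 * (norm (a - \<eta>e))^2"
    and DV_bound: "\<And>a. norm (DV a) \<le> \<alpha>3 * norm (a - \<eta>e)"
    and alpha_cond: "\<alpha>4 > (\<alpha>3 * l\<phi> / 2)^2"
  shows "\<exists>\<gamma>star>0. \<forall>\<gamma>::nat \<Rightarrow> real. (\<forall>i<r. \<gamma>star \<le> \<gamma> i) \<longrightarrow>
           q \<eta>e (\<lambda>i. Gam \<gamma> r i * \<kappa> \<eta>e) = 0 \<longrightarrow>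
           (\<forall>a. DV a \<bullet> q a (\<lambda>i. Gam \<gamma> r i * \<kappa> a) \<le> - \<alpha>4 * (norm (a - \<eta>e))^2) \<longrightarrow>
           (\<forall>(\<phi>::real \<Rightarrow> nat \<Rightarrow> real) (\<eta>::real \<Rightarrow> 'b).
              (\<forall>i<r. \<phi> 0 i \<ge> 0) \<longrightarrow>
              (\<forall>t\<ge>0. \<forall>i<r. ((\<lambda>s. \<phi> s i) has_real_derivative
                        casc_rhs r \<gamma> (\<phi> t) (\<kappa> (\<eta> t)) i) (at t within {0..})) \<longrightarrow>
              (\<forall>t\<ge>0. (\<eta> has_vector_derivative q (\<eta> t) (\<phi> t)) (at t within {0..})) \<longrightarrow>
              (\<forall>i<r. ((\<lambda>t. \<phi> t i) \<longlongrightarrow> Gam \<gamma> r i * \<kappa> \<eta>e) at_top)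
              \<and> (\<eta> \<longlongrightarrow> \<eta>e) at_top
              \<and> (\<exists>M. \<forall>t\<ge>0. vnorm r (\<phi> t) + norm (\<eta> t) \<le> M))"
proof -
  \<comment> \<open>A large gain absorbs all cross terms.\<close>
  define g where "g = 2 + ((\<alpha>3 * \<bar>l\<phi>\<bar> + 2 * \<bar>L\<kappa>\<bar>)\<^sup>2 + 2 * \<alpha>3 * \<bar>l\<phi>\<bar> * \<bar>L\<kappa>\<bar> * real r) / \<alpha>4"
  have "0 < g"
    using alpha_pos by (simp add: g_def add_pos_nonneg)
  have q_lip: "norm (q a p - q a p') \<le> \<bar>l\<phi>\<bar> * vnorm r (\<lambda>i. p i - p' i)" for a p p'
    using q_lip_phi[of a p p'] mult_right_mono[OF abs_ge_self vnorm_nonneg] by (rule order_trans)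
  have kappa_abs_lip: "\<bar>\<kappa> a - \<kappa> b\<bar> \<le> \<bar>L\<kappa>\<bar> * norm (a - b)" for a b
    using kappa_lip[of a b] mult_right_mono[OF abs_ge_self norm_ge_zero] by (rule order_trans)
  show ?thesis
  proof (intro exI[of _ g] conjI[OF \<open>0 < g\<close>] allI impI)
    fix \<gamma> :: "nat \<Rightarrow> real" and \<phi> :: "real \<Rightarrow> nat \<Rightarrow> real" and \<eta> :: "real \<Rightarrow> 'b"
    assume gamma_ge: "\<forall>i<r. g \<le> \<gamma> i"
      and V_decrease: "\<forall>a. DV a \<bullet> q a (\<lambda>i. Gam \<gamma> r i * \<kappa> a) \<le> - \<alpha>4 * (norm (a - \<eta>e))^2"
      and phi_deriv: "\<forall>t\<ge>0. \<forall>i<r. ((\<lambda>s. \<phi> s i) has_real_derivative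
                        casc_rhs r \<gamma> (\<phi> t) (\<kappa> (\<eta> t)) i) (at t within {0..})"
      and eta_deriv: "\<forall>t\<ge>0. (\<eta> has_vector_derivative q (\<eta> t) (\<phi> t)) (at t within {0..})"
    interpret cbf_cascade r \<gamma> g q \<kappa> V DV \<eta>e "\<bar>l\<phi>\<bar>" "\<bar>L\<kappa>\<bar>" \<alpha>1 \<alpha>2 \<alpha>3 \<alpha>4
      using q_lip kappa_abs_lip alpha_pos V_deriv V_bounds DV_bound V_decrease gamma_ge
      by unfold_locales (auto simp: g_def)
    have solution:
      "\<And>t i. 0 \<le> t \<Longrightarrow> i < r \<Longrightarrow>
         ((\<lambda>s. \<phi> s i) has_real_derivative casc_rhs r \<gamma> (\<phi> t) (\<kappa> (\<eta> t)) i) (at t within {0..})"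
      "\<And>t. 0 \<le> t \<Longrightarrow> (\<eta> has_vector_derivative q (\<eta> t) (\<phi> t)) (at t within {0..})"
      using phi_deriv eta_deriv by auto
    show "(\<forall>i<r. ((\<lambda>t. \<phi> t i) \<longlongrightarrow> Gam \<gamma> r i * \<kappa> \<eta>e) at_top)
          \<and> (\<eta> \<longlongrightarrow> \<eta>e) at_top
          \<and> (\<exists>M. \<forall>t\<ge>0. vnorm r (\<phi> t) + norm (\<eta> t) \<le> M)"
      using phi_tendsto_equilibrium[OF solution] eta_tendsto_equilibrium[OF solution]
        trajectory_bounded[OF solution]
      by (simp add: \<phi>e_def)
  qed
qed

end
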